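(* Let $\mathcal{P}$ be a partition of $\mathbb{R}$. Suppose there exists $D\in(0,\infty)$ that is a strict pairwise bound for every $X\in\mathcal{P}$, and let $\epsilon\in(0,\infty)$ be such that $|\mathcal{N}_{\epsilon}(p)|\leq 2$ for all $p\in\mathbb{R}$. Then $\epsilon\leq\frac{D}{2}$.
   Context: $D$ is a strict pairwise bound for $X\subseteq\mathbb{R}$ if $|x-y|<D$ for all $x,y\in X$. $\mathcal{N}_{\epsilon}(p)=\{X\in\mathcal{P}: X\cap[p-\epsilon,p+\epsilon]\neq\emptyset\}$. *)

theory Defs
  imports Complex_Main "HOL-Library.Disjoint_Sets"
begin

definition strict_pairwise_bound :: "real \<Rightarrow> real set \<Rightarrow> bool" where
  "strict_pairwise_bound D X \<longleftrightarrow> (\<forall>x\<in>X. \<forall>y\<in>X. \<bar>x - y\<bar> < D)"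

definition nbhd :: "real set set \<Rightarrow> real \<Rightarrow> real \<Rightarrow> real set set" where
  "nbhd P eps p = {X \<in> P. X \<inter> {p - eps .. p + eps} \<noteq> {}}"

end

theory Submission
  imports Defs
begin

text \<open>If \<open>\<epsilon> > D/2\<close>, take a cell \<open>X\<close>; it lies in an interval \<open>[m, m + D]\<close>, so the window of
  radius \<open>\<epsilon>\<close> centred at \<open>m + D/2\<close> contains \<open>X\<close> while its two endpoints lie outside \<open>X\<close>.
  The endpoints are \<open>2\<epsilon> > D\<close> apart, hence lie in two further distinct cells, and the window
  meets three cells.\<close>

lemma strict_pairwise_bound_imp_subset_interval:
  assumes "strict_pairwise_bound D X" and "x \<in> X"
  obtains m where "X \<subseteq> {m .. m + D}"
proof
  have bound: "\<bar>y - z\<bar> < D" if "y \<in> X" "z \<in> X" for y z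
    using assms(1) that unfolding strict_pairwise_bound_def by blast
  have "bdd_below X"
    using bound[OF _ assms(2)] by (intro bdd_belowI[of _ "x - D"]) force
  then have "Inf X \<le> y" if "y \<in> X" for y
    using that by (simp add: cInf_lower)
  moreover have "y - D \<le> Inf X" if "y \<in> X" for y
    using assms(2) bound[OF that] by (intro cInf_greatest) (force simp: abs_less_iff)+
  ultimately show "X \<subseteq> {Inf X .. Inf X + D}"
    by fastforce
qed

lemma partition_on_UNIV_cell:
  assumes "partition_on UNIV P"
  obtains X where "X \<in> P" and "x \<in> X"
  using assms unfolding partition_on_def by blast

lemma mem_nbhdI:
  assumes "X \<in> P" and "x \<in> X" and "\<bar>x - p\<bar> \<le> eps"
  shows "X \<in> nbhd P eps p"
  using assms unfolding nbhd_def by (auto simp: abs_le_iff)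

lemma three_le_card_nbhd:
  assumes partition: "partition_on UNIV P"
    and bounded: "\<forall>X\<in>P. strict_pairwise_bound D X"
    and wide: "D \<le> 2 * eps"
    and X: "X \<in> P" "x \<in> X" "\<bar>x - p\<bar> \<le> eps"
    and ends_outside: "p - eps \<notin> X" "p + eps \<notin> X"
    and finite: "finite (nbhd P eps p)"
  shows "3 \<le> card (nbhd P eps p)"
proof -
  obtain Y where Y: "Y \<in> P" "p - eps \<in> Y"
    using partition by (rule partition_on_UNIV_cell)
  obtain Z where Z: "Z \<in> P" "p + eps \<in> Z"
    using partition by (rule partition_on_UNIV_cell)
  have "Y \<noteq> Z"
  proof
    assume "Y = Z"
    with Y Z bounded have "\<bar>(p + eps) - (p - eps)\<bar> < D"
      unfolding strict_pairwise_bound_def by blast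
    with wide show False
      by simp
  qed
  moreover have "X \<noteq> Y" and "X \<noteq> Z"
    using ends_outside Y Z by auto
  ultimately have "3 = card {X, Y, Z}"
    by simp
  also have "\<dots> \<le> card (nbhd P eps p)"
  proof (rule card_mono[OF finite])
    show "{X, Y, Z} \<subseteq> nbhd P eps p"
      using X Y Z by (auto intro: mem_nbhdI)
  qed
  finally show ?thesis
    by simp
qed

theorem mainTheorem19:
  fixes P :: "real set set" and D eps :: real
  assumes "partition_on (UNIV :: real set) P"
    and "D > 0"
    and "\<forall>X\<in>P. strict_pairwise_bound D X"
    and "eps > 0"
    and "\<forall>p. finite (nbhd P eps p) \<and> card (nbhd P eps p) \<le> 2"
  shows "eps \<le> D / 2"
proof (rule ccontr)
  assume "\<not> eps \<le> D / 2"
  obtain X where X: "X \<in> P" "0 \<in> X"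
    using assms(1) by (rule partition_on_UNIV_cell)
  from X(1) assms(3) have "strict_pairwise_bound D X"
    by blast
  then obtain m where m: "X \<subseteq> {m .. m + D}"
    using X(2) by (rule strict_pairwise_bound_imp_subset_interval)
  define p where "p = m + D / 2"
  have "\<bar>0 - p\<bar> \<le> eps" and "p - eps \<notin> X" and "p + eps \<notin> X"
    using m X(2) \<open>\<not> eps \<le> D / 2\<close> unfolding p_def by (auto simp: abs_le_iff)
  then have "3 \<le> card (nbhd P eps p)"
    using assms(1,3,5) X \<open>\<not> eps \<le> D / 2\<close> by (intro three_le_card_nbhd) auto
  moreover have "card (nbhd P eps p) \<le> 2"
    using assms(5) by blast
  ultimately show False
    by linarith
qed

end
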